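(* Let $b\ge2$ be an integer and let $w=d_1\dots d_p$ be a fixed block of $b$-ary digits with $p\ge1$. Let $u=d_1\dots d_{p-1}$ and $v=d_2\dots d_p$. Let $k\ge1$. Then for every string $s$ of length $p-1$, the following identity of formal Laurent series in $t$ holds: $$Z_w(s,k)=t^{2-p}\,Z_w(s,0,u)\,Z_w(v,k-1).$$
   Context: Strings are finite sequences over $\{0,\dots,b-1\}$, including the empty string $\epsilon$. $k_w(X)$ is the number of possibly overlapping occurrences of $w$ in the string $X$, and $X$ is $j$-admissible if $k_w(X)=j$. For strings $x,y$ and $j\ge0$, $Z_w(x,j,y)=\sum_{l\ge0}c_l t^l$, where $c_l$ is the number of $j$-admissible strings of length $l$ that have $x$ as a prefix and $y$ as a suffix. Also $Z_w(x,j)=Z_w(x,j,\epsilon)$. When $p=1$, $u=v=s=\epsilon$. *)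

theory Defs
  imports Main "HOL-Library.Sublist" "HOL-Computational_Algebra.Formal_Laurent_Series"
begin

definition bstrings :: "nat \<Rightarrow> nat list set" where
  "bstrings b = {xs. set xs \<subseteq> {..<b}}"

definition occ :: "nat list \<Rightarrow> nat list \<Rightarrow> nat" where
  "occ w X = card {i. i + length w \<le> length X \<and> take (length w) (drop i X) = w}"

definition Z3 :: "nat \<Rightarrow> nat list \<Rightarrow> nat list \<Rightarrow> nat \<Rightarrow> nat list \<Rightarrow> int fps" where
  "Z3 b w x j y = Abs_fps (\<lambda>l. int (card {X \<in> bstrings b. length X = l \<and> prefix x X
       \<and> suffix y X \<and> occ w X = j}))"

definition Z2 :: "nat \<Rightarrow> nat list \<Rightarrow> nat list \<Rightarrow> nat \<Rightarrow> int fps" where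
  "Z2 b w x j = Z3 b w x j []"

end

theory Submission
  imports Defs
begin

text \<open>Cut a string X with k \<ge> 1 occurrences of w at the first one: X = A w B, where A u
contains no occurrence of w. The remaining occurrences of w in X are exactly those of v B, so v B
has k - 1 occurrences. Counting the pairs (A, B) by length gives Z_w(s,k) = t^p H T, while the
strings A u and v B are counted by Z_w(s,0,u) = t^(p-1) H and Z_w(v,k-1) = t^(p-1) T.\<close>

definition occurrences :: "'a list \<Rightarrow> 'a list \<Rightarrow> nat set" where
  "occurrences w X = {i. i + length w \<le> length X \<and> take (length w) (drop i X) = w}"

lemma occ_eq_card_occurrences: "occ w X = card (occurrences w X)"
  by (simp add: occ_def occurrences_def)

lemma finite_occurrences [simp]: "finite (occurrences w X)"
  by (rule finite_subset[of _ "{..length X}"]) (auto simp: occurrences_def)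

lemma occurrences_append_left_iff:
  "i + length w \<le> length Y \<Longrightarrow> i \<in> occurrences w (Y @ Z) \<longleftrightarrow> i \<in> occurrences w Y"
  by (simp add: occurrences_def)

lemma occurrences_append_right_iff:
  "length Y + j \<in> occurrences w (Y @ Z) \<longleftrightarrow> j \<in> occurrences w Z"
  by (simp add: occurrences_def)

lemma append_split_at_last:
  "w \<noteq> [] \<Longrightarrow> A @ w @ B = (A @ butlast w) @ (last w # B)"
  by (metis append.assoc append_Cons append_Nil append_butlast_last_id)

lemma occurrences_append_first:
  assumes "w \<noteq> []" and "occ w (A @ butlast w) = 0"
  shows "occurrences w (A @ w @ B)
    = insert (length A) ((+) (Suc (length A)) ` occurrences w (tl w @ B))"
    (is "?L = ?R")
proof (intro set_eqI iffI)
  have split_hd: "A @ w @ B = (A @ [hd w]) @ (tl w @ B)"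
    using assms(1) by (cases w) auto
  have after: "Suc (length A) + j \<in> ?L \<longleftrightarrow> j \<in> occurrences w (tl w @ B)" for j
    using occurrences_append_right_iff[of "A @ [hd w]" j w "tl w @ B"] unfolding split_hd by simp
  have before: "i \<notin> ?L" if "i < length A" for i
  proof
    assume "i \<in> ?L"
    have inside: "i + length w \<le> length (A @ butlast w)"
      using that assms(1) by (cases w) auto
    have "i \<in> occurrences w (A @ butlast w)"
      using \<open>i \<in> ?L\<close>
      unfolding append_split_at_last[OF assms(1)] occurrences_append_left_iff[OF inside] .
    then show False
      using assms(2) by (simp add: occ_eq_card_occurrences)
  qed
  fix i
  show "i \<in> ?R" if "i \<in> ?L"
  proof -
    consider "i < length A" | "i = length A" | j where "i = Suc (length A) + j"
      by (metis less_imp_Suc_add linorder_neqE_nat add_Suc)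
    then show ?thesis
      using that before after by cases auto
  qed
  have "length A \<in> ?L"
    by (simp add: occurrences_def)
  then show "i \<in> ?L" if "i \<in> ?R"
    using that after by auto
qed

lemma occ_append_first:
  assumes "w \<noteq> []" and "occ w (A @ butlast w) = 0"
  shows "occ w (A @ w @ B) = Suc (occ w (tl w @ B))"
  unfolding occ_eq_card_occurrences occurrences_append_first[OF assms]
  by (subst card_insert_disjoint) (auto simp: card_image inj_on_def)

lemma Min_occurrences_append_first:
  assumes "w \<noteq> []" and "occ w (A @ butlast w) = 0"
  shows "Min (occurrences w (A @ w @ B)) = length A"
  unfolding occurrences_append_first[OF assms] by (intro Min_eqI) auto

lemma first_occurrence_split:
  assumes "w \<noteq> []" and "occ w X \<noteq> 0"
  obtains A B where "X = A @ w @ B" and "occ w (A @ butlast w) = 0"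
proof
  define i where "i = Min (occurrences w X)"
  have "occurrences w X \<noteq> {}"
    using assms(2) by (auto simp: occ_eq_card_occurrences)
  then have i: "i \<in> occurrences w X" and i_min: "\<And>j. j \<in> occurrences w X \<Longrightarrow> i \<le> j"
    unfolding i_def by simp_all
  then have "take (length w) (drop i X) = w"
    by (simp add: occurrences_def)
  then show X: "X = take i X @ w @ drop (i + length w) X"
    by (metis append_take_drop_id add.commute drop_drop)
  have "occurrences w (take i X @ butlast w) = {}"
  proof (rule equals0I)
    fix j
    assume j: "j \<in> occurrences w (take i X @ butlast w)"
    then have "j + length w \<le> length (take i X @ butlast w)"
      by (simp add: occurrences_def)
    moreover have "X = (take i X @ butlast w) @ (last w # drop (i + length w) X)"
      by (rule trans[OF X append_split_at_last[OF assms(1)]])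
    ultimately have "j \<in> occurrences w X"
      using j occurrences_append_left_iff by metis
    moreover have "j < i"
      using \<open>j + length w \<le> _\<close> assms(1) by (cases w rule: rev_cases) auto
    ultimately show False
      using i_min by fastforce
  qed
  then show "occ w (take i X @ butlast w) = 0"
    by (simp add: occ_eq_card_occurrences)
qed

definition card_fps :: "(nat \<Rightarrow> 'a set) \<Rightarrow> int fps" where
  "card_fps S = Abs_fps (\<lambda>n. int (card (S n)))"

lemma card_fps_shift:
  assumes "\<And>n. n < c \<Longrightarrow> C n = {}" and "\<And>m. bij_betw f (D m) (C (m + c))"
  shows "card_fps C = fps_X ^ c * card_fps D"
proof (rule fps_ext)
  fix n
  show "card_fps C $ n = (fps_X ^ c * card_fps D) $ n"
  proof (cases "n < c")
    case False
    then have "C n = C ((n - c) + c)"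
      by simp
    then show ?thesis
      using False bij_betw_same_card[OF assms(2)] by (simp add: card_fps_def fps_X_power_mult_nth)
  qed (simp add: assms(1) card_fps_def fps_X_power_mult_nth)
qed

lemma card_fps_Cauchy_product:
  assumes "\<And>i. finite (H i)" and "\<And>j. finite (T j)" and "\<And>i j. i \<noteq> j \<Longrightarrow> H i \<inter> H j = {}"
  shows "card_fps (\<lambda>m. \<Union>i\<le>m. H i \<times> T (m - i)) = card_fps H * card_fps T"
proof (rule fps_ext)
  fix m
  have "card (\<Union>i\<le>m. H i \<times> T (m - i)) = (\<Sum>i\<le>m. card (H i) * card (T (m - i)))"
    using assms by (subst card_UN_disjoint) (auto simp: card_cartesian_product disjoint_iff)
  then show "card_fps (\<lambda>m. \<Union>i\<le>m. H i \<times> T (m - i)) $ m = (card_fps H * card_fps T) $ m"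
    by (simp add: card_fps_def fps_mult_nth atLeast0AtMost)
qed

lemma Z3_eq_card_fps:
  "Z3 b w x j y
    = card_fps (\<lambda>n. {X \<in> bstrings b. length X = n \<and> prefix x X \<and> suffix y X \<and> occ w X = j})"
  by (simp add: Z3_def card_fps_def)

lemma bstrings_append [simp]: "xs @ ys \<in> bstrings b \<longleftrightarrow> xs \<in> bstrings b \<and> ys \<in> bstrings b"
  by (auto simp: bstrings_def)

lemma bstrings_butlast: "xs \<in> bstrings b \<Longrightarrow> butlast xs \<in> bstrings b"
  by (auto simp: bstrings_def dest: in_set_butlastD)

lemma bstrings_tl: "xs \<in> bstrings b \<Longrightarrow> tl xs \<in> bstrings b"
  by (cases xs) (auto simp: bstrings_def)

lemma finite_bstrings_length: "finite {A \<in> bstrings b. length A = n}"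
  using finite_lists_length_eq[of "{..<b}" n] by (simp add: bstrings_def)

definition heads :: "nat \<Rightarrow> nat list \<Rightarrow> nat list \<Rightarrow> nat \<Rightarrow> nat list set" where
  "heads b w s n = {A \<in> bstrings b. length A = n \<and> prefix s (A @ butlast w)
     \<and> occ w (A @ butlast w) = 0}"

definition tails :: "nat \<Rightarrow> nat list \<Rightarrow> nat \<Rightarrow> nat \<Rightarrow> nat list set" where
  "tails b w k n = {B \<in> bstrings b. length B = n \<and> occ w (tl w @ B) = k}"

lemma finite_heads: "finite (heads b w s n)"
  by (rule finite_subset[OF _ finite_bstrings_length[of b n]]) (auto simp: heads_def)

lemma finite_tails: "finite (tails b w k n)"
  by (rule finite_subset[OF _ finite_bstrings_length[of b n]]) (auto simp: tails_def)

lemma Z3_butlast_eq_heads: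
  assumes "w \<in> bstrings b"
  shows "Z3 b w s 0 (butlast w) = fps_X ^ (length w - 1) * card_fps (heads b w s)"
  unfolding Z3_eq_card_fps
proof (rule card_fps_shift)
  show "bij_betw (\<lambda>A. A @ butlast w) (heads b w s m)
      {X \<in> bstrings b. length X = m + (length w - 1) \<and> prefix s X \<and> suffix (butlast w) X
         \<and> occ w X = 0}" for m
    using bstrings_butlast[OF assms]
    by (auto simp: bij_betw_def inj_on_def heads_def suffix_def image_iff)
qed (auto simp: suffix_def)

lemma Z2_tl_eq_tails:
  assumes "w \<in> bstrings b"
  shows "Z2 b w (tl w) k = fps_X ^ (length w - 1) * card_fps (tails b w k)"
  unfolding Z2_def Z3_eq_card_fps
proof (rule card_fps_shift)
  show "bij_betw (\<lambda>B. tl w @ B) (tails b w k m)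
      {X \<in> bstrings b. length X = m + (length w - 1) \<and> prefix (tl w) X \<and> suffix [] X
         \<and> occ w X = k}" for m
    using bstrings_tl[OF assms]
    by (auto simp: bij_betw_def inj_on_def tails_def prefix_def image_iff)
qed (auto simp: prefix_def)

lemma prefix_append_butlast:
  assumes "w \<noteq> []"
  shows "prefix (A @ butlast w) (A @ w @ B)"
  unfolding append_split_at_last[OF assms] by simp

lemma first_occurrence_bij:
  assumes "w \<noteq> []" and "w \<in> bstrings b" and "length s < length w" and "k \<ge> 1"
  shows "bij_betw (\<lambda>(A, B). A @ w @ B) (\<Union>i\<le>m. heads b w s i \<times> tails b w (k - 1) (m - i))
    {X \<in> bstrings b. length X = m + length w \<and> prefix s X \<and> occ w X = k}"
    (is "bij_betw ?glue ?D ?C")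
proof (rule bij_betw_imageI)
  show "inj_on ?glue ?D"
  proof (rule inj_onI, clarify)
    fix A B A' B' i i'
    assume "A \<in> heads b w s i" "A' \<in> heads b w s i'" and glue: "A @ w @ B = A' @ w @ B'"
    then have "occ w (A @ butlast w) = 0" and "occ w (A' @ butlast w) = 0"
      by (simp_all add: heads_def)
    then have "length A = length A'"
      using glue Min_occurrences_append_first[OF assms(1)] by metis
    then show "A = A' \<and> B = B'"
      using glue by simp
  qed
  show "?glue ` ?D = ?C"
  proof (intro set_eqI iffI)
    fix X
    assume "X \<in> ?glue ` ?D"
    then obtain i A B where "i \<le> m" "A \<in> heads b w s i" "B \<in> tails b w (k - 1) (m - i)"
      and X: "X = A @ w @ B"
      by auto
    then show "X \<in> ?C"
      using assms occ_append_first[OF assms(1)] prefix_append_butlast[OF assms(1)]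
      by (auto simp: heads_def tails_def intro: prefix_order.trans)
  next
    fix X
    assume "X \<in> ?C"
    then have X: "X \<in> bstrings b" "length X = m + length w" "prefix s X" "occ w X = k"
      by auto
    then obtain A B where glue: "X = A @ w @ B" and head: "occ w (A @ butlast w) = 0"
      using first_occurrence_split[OF assms(1)] assms(4) by (metis not_one_le_zero)
    have "prefix (A @ butlast w) X"
      using prefix_append_butlast[OF assms(1)] glue by simp
    then have "prefix s (A @ butlast w)"
      using prefix_length_prefix[OF X(3)] assms(3) by simp
    then have "A \<in> heads b w s (length A)" and "B \<in> tails b w (k - 1) (m - length A)"
      using X head glue occ_append_first[OF assms(1) head, of B]
      by (auto simp: heads_def tails_def)
    moreover have "length A \<le> m"
      using X(2) glue by simp
    ultimately show "X \<in> ?glue ` ?D"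
      using glue by (intro image_eqI[of _ _ "(A, B)"]) auto
  qed
qed

lemma Z2_eq_heads_tails:
  assumes "w \<noteq> []" and "w \<in> bstrings b" and "length s < length w" and "k \<ge> 1"
  shows "Z2 b w s k = fps_X ^ length w * (card_fps (heads b w s) * card_fps (tails b w (k - 1)))"
proof -
  have "Z2 b w s k = card_fps (\<lambda>n. {X \<in> bstrings b. length X = n \<and> prefix s X \<and> occ w X = k})"
    by (simp add: Z2_def Z3_eq_card_fps)
  also have "\<dots> = fps_X ^ length w
      * card_fps (\<lambda>m. \<Union>i\<le>m. heads b w s i \<times> tails b w (k - 1) (m - i))"
  proof (rule card_fps_shift)
    show "bij_betw (\<lambda>(A, B). A @ w @ B) (\<Union>i\<le>m. heads b w s i \<times> tails b w (k - 1) (m - i))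
      {X \<in> bstrings b. length X = m + length w \<and> prefix s X \<and> occ w X = k}" for m
      by (rule first_occurrence_bij[OF assms])
    show "{X \<in> bstrings b. length X = n \<and> prefix s X \<and> occ w X = k} = {}" if "n < length w" for n
      using that assms(4) by (auto simp: occ_eq_card_occurrences occurrences_def card_eq_0_iff)
  qed
  also have "\<dots> = fps_X ^ length w * (card_fps (heads b w s) * card_fps (tails b w (k - 1)))"
    by (subst card_fps_Cauchy_product[OF finite_heads finite_tails]) (auto simp: heads_def)
  finally show ?thesis .
qed

lemma fps_to_fls_fps_X_power_times:
  "fps_to_fls (fps_X ^ n * F) = fls_X_intpow (int n) * fps_to_fls (F :: 'a :: comm_ring_1 fps)"
  by (simp add: fls_times_fps_to_fls fps_to_fls_power fls_X_power_conv_shift_1)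

theorem lemma3:
  fixes b p k :: nat and w s :: "nat list"
  assumes "b \<ge> 2" and "w \<in> bstrings b" and "length w = p" and "p \<ge> 1"
    and "k \<ge> 1" and "s \<in> bstrings b" and "length s = p - 1"
  shows "fps_to_fls (Z2 b w s k)
       = fls_X_intpow (2 - int p) * fps_to_fls (Z3 b w s 0 (butlast w))
           * fps_to_fls (Z2 b w (tl w) (k - 1))"
proof -
  have "w \<noteq> []" and "length s < length w"
    using assms(3,4,7) by auto
  note gfs = Z2_eq_heads_tails[OF this(1) assms(2) this(2) assms(5)]
    Z3_butlast_eq_heads[OF assms(2)] Z2_tl_eq_tails[OF assms(2)]
  have X_power: "fls_X_intpow (int p) = fls_X_intpow (2 - int p) * fls_X_intpow (int (p - 1))
      * (fls_X_intpow (int (p - 1)) :: int fls)"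
    unfolding fls_X_intpow_times_fls_X_intpow using assms(4) by simp
  show ?thesis
    unfolding gfs assms(3) fps_to_fls_fps_X_power_times
    unfolding X_power fls_times_fps_to_fls
    by (simp add: algebra_simps)
qed

end
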